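(* Let $X$ be a space and $Y$ a preopen (e.g., dense) subspace of $X$ which is an E-space. Then $Y$ is $F_{\aleph_0}$-embedded in $X$. In particular, every metrizable dense subspace of $X$ is $F_{\aleph_0}$-embedded in $X$.
   Context: "Space" means topological $T_0$-space. $Y$ is preopen in $X$ if $Y\subseteq\mathrm{int}_X(\mathrm{cl}_X(Y))$. A zero-set (cozero-set) of $X$ is $f^{-1}(0)$ (resp. its complement) for a continuous $f:X\to[0,1]$. A U-representation of $V\subseteq X$ is a sequence $(U_n(V))_{n\in\mathbb{N}}$ with $V=\bigcup_n U_n(V)$, $U_n(V)\subseteq U_{n+1}(V)$, $U_{2n-1}(V)$ a zero-set, $U_{2n}(V)$ a cozero-set. A family $\alpha$ is an almost subbase of $X$ if U-representations of its members can be chosen so that $\alpha\cup\{X\setminus U_{2n-1}(V):V\in\alpha,n\in\mathbb{N}\}$ is a subbase of $X$. A family is strongly point-finite if every countably infinite subfamily contains a finite subfamily with empty intersection; $\sigma$-strongly point-finite means a countable union of such families. An E-space is a space with a $\sigma$-strongly point-finite almost subbase. A family $\mathcal{U}$ F-separates $S\subseteq X$ if for distinct $x,y\in S$ some $U\in\mathcal{U}$ satisfies $x\in U$, $y\notin\mathrm{cl}_X(U)$, or vice versa. $Y$ is $F_{\aleph_0}$-embedded in $X$ if some family of open subsets of $X$ that is a countable union of point-finite families F-separates $Y$. *)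

theory Defs
  imports "HOL-Analysis.Analysis"
begin

definition zero_set_in :: "'a topology \<Rightarrow> 'a set \<Rightarrow> bool" where
  "zero_set_in X Z \<longleftrightarrow> (\<exists>f. continuous_map X euclideanreal f \<and> f ` topspace X \<subseteq> {0..1}
      \<and> Z = {x \<in> topspace X. f x = 0})"

definition cozero_set_in :: "'a topology \<Rightarrow> 'a set \<Rightarrow> bool" where
  "cozero_set_in X C \<longleftrightarrow> (\<exists>Z. zero_set_in X Z \<and> C = topspace X - Z)"

text \<open>U-representation (U_n)_{n \<ge> 1} of V; index 0 of the function is unused.\<close>
definition U_representation :: "'a topology \<Rightarrow> 'a set \<Rightarrow> (nat \<Rightarrow> 'a set) \<Rightarrow> bool" where
  "U_representation X V U \<longleftrightarrow>
     V = (\<Union>n\<in>{1..}. U n) \<and>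
     (\<forall>n\<ge>1. U n \<subseteq> U (Suc n)) \<and>
     (\<forall>n\<ge>1. zero_set_in X (U (2*n - 1))) \<and>
     (\<forall>n\<ge>1. cozero_set_in X (U (2*n)))"

text \<open>Subbase: the topology of X is generated by S together with the empty intersection X.\<close>
definition subbase_of :: "'a topology \<Rightarrow> 'a set set \<Rightarrow> bool" where
  "subbase_of X S \<longleftrightarrow> S \<subseteq> Pow (topspace X) \<and> X = topology_generated_by (insert (topspace X) S)"

definition almost_subbase :: "'a topology \<Rightarrow> 'a set set \<Rightarrow> bool" where
  "almost_subbase X \<alpha> \<longleftrightarrow>
     (\<exists>R :: 'a set \<Rightarrow> nat \<Rightarrow> 'a set.
        (\<forall>V\<in>\<alpha>. U_representation X V (R V)) \<and>
        subbase_of X (\<alpha> \<union> {topspace X - R V (2*n - 1) | V n. V \<in> \<alpha> \<and> n \<ge> 1}))"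

definition strongly_point_finite :: "'a set set \<Rightarrow> bool" where
  "strongly_point_finite \<F> \<longleftrightarrow>
     (\<forall>\<C>\<subseteq>\<F>. countable \<C> \<and> infinite \<C> \<longrightarrow> (\<exists>\<D>\<subseteq>\<C>. finite \<D> \<and> \<Inter>\<D> = {}))"

definition sigma_strongly_point_finite :: "'a set set \<Rightarrow> bool" where
  "sigma_strongly_point_finite \<F> \<longleftrightarrow>
     (\<exists>G :: nat \<Rightarrow> 'a set set. \<F> = (\<Union>n. G n) \<and> (\<forall>n. strongly_point_finite (G n)))"

definition E_space :: "'a topology \<Rightarrow> bool" where
  "E_space X \<longleftrightarrow> t0_space X \<and> (\<exists>\<alpha>. almost_subbase X \<alpha> \<and> sigma_strongly_point_finite \<alpha>)"

definition preopen_in :: "'a topology \<Rightarrow> 'a set \<Rightarrow> bool" where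
  "preopen_in X Y \<longleftrightarrow> Y \<subseteq> topspace X \<and> Y \<subseteq> X interior_of (X closure_of Y)"

definition F_separates :: "'a topology \<Rightarrow> 'a set set \<Rightarrow> 'a set \<Rightarrow> bool" where
  "F_separates X \<U> S \<longleftrightarrow>
     (\<forall>x\<in>S. \<forall>y\<in>S. x \<noteq> y \<longrightarrow>
        (\<exists>U\<in>\<U>. (x \<in> U \<and> y \<notin> X closure_of U) \<or> (y \<in> U \<and> x \<notin> X closure_of U)))"

definition point_finite_in :: "'a topology \<Rightarrow> 'a set set \<Rightarrow> bool" where
  "point_finite_in X \<F> \<longleftrightarrow> (\<forall>x\<in>topspace X. finite {U\<in>\<F>. x \<in> U})"

definition F_aleph0_embedded :: "'a topology \<Rightarrow> 'a set \<Rightarrow> bool" where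
  "F_aleph0_embedded X Y \<longleftrightarrow>
     (\<exists>\<U>. (\<forall>U\<in>\<U>. openin X U) \<and>
          (\<exists>G :: nat \<Rightarrow> 'a set set. \<U> = (\<Union>n. G n) \<and> (\<forall>n. point_finite_in X (G n))) \<and>
          F_separates X \<U> Y)"

end

theory Submission
  imports Defs
begin

text \<open>If \<open>Y\<close> is preopen in \<open>X\<close>, an open set \<open>W\<close> of \<open>Y\<close> extends to the open set
  \<open>int (cl Y) - cl (Y - W)\<close> of \<open>X\<close>, which meets \<open>Y\<close> exactly in \<open>W\<close> and whose closure lies in
  \<open>cl W\<close>. As \<open>Y\<close> is dense in \<open>int (cl Y)\<close>, finitely many extensions have empty intersection
  as soon as the original sets do, so a \<open>\<sigma>\<close>-strongly point-finite open family of \<open>Y\<close> that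
  F-separates \<open>Y\<close> extends to a \<open>\<sigma>\<close>-point-finite open family of \<open>X\<close> that still F-separates
  \<open>Y\<close>. Such families exist in E-spaces: for \<open>V\<close> in the almost subbase and \<open>f\<close> vanishing exactly
  on \<open>U_{2n-1}(V)\<close>, the sets \<open>{x \<in> U_{2n}(V). |f x| < 1/j}\<close> shrink \<open>V\<close>, and two points are
  separated by a single subbase element. In metric spaces, Stone's pairwise disjoint cells
  of rational radius do the job.\<close>

definition sigma_spf_F_separated :: "'a topology \<Rightarrow> bool" where
  "sigma_spf_F_separated X \<longleftrightarrow>
     (\<exists>\<U>. (\<forall>U\<in>\<U>. openin X U) \<and> sigma_strongly_point_finite \<U> \<and> F_separates X \<U> (topspace X))"

subsection \<open>Strongly point-finite families\<close>

lemma strongly_point_finite_image: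
  assumes spf: "strongly_point_finite \<G>"
    and empty: "\<And>\<D>. \<D> \<subseteq> \<G> \<Longrightarrow> finite \<D> \<Longrightarrow> \<Inter>\<D> = {} \<Longrightarrow> \<Inter>(\<phi> ` \<D>) = {}"
  shows "strongly_point_finite (\<phi> ` \<G>)"
  unfolding strongly_point_finite_def
proof (intro allI impI)
  fix \<C> assume \<C>: "\<C> \<subseteq> \<phi> ` \<G>" "countable \<C> \<and> infinite \<C>"
  define \<psi> where "\<psi> = inv_into \<G> \<phi>"
  have \<psi>: "\<psi> C \<in> \<G>" "\<phi> (\<psi> C) = C" if "C \<in> \<C>" for C
    using \<C>(1) that unfolding \<psi>_def by (auto intro: inv_into_into simp: f_inv_into_f)
  then have "inj_on \<psi> \<C>"
    by (metis inj_onI)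
  then have "countable (\<psi> ` \<C>) \<and> infinite (\<psi> ` \<C>)"
    using \<C>(2) finite_imageD by blast
  moreover have "\<psi> ` \<C> \<subseteq> \<G>"
    using \<psi> by blast
  ultimately obtain \<D> where \<D>: "\<D> \<subseteq> \<psi> ` \<C>" "finite \<D>" "\<Inter>\<D> = {}"
    using spf unfolding strongly_point_finite_def by meson
  show "\<exists>\<D>\<subseteq>\<C>. finite \<D> \<and> \<Inter>\<D> = {}"
  proof (intro exI conjI)
    show "\<phi> ` \<D> \<subseteq> \<C>" "finite (\<phi> ` \<D>)"
      using \<D>(1,2) \<psi> by auto
    have "\<D> \<subseteq> \<G>"
      using \<D>(1) \<open>\<psi> ` \<C> \<subseteq> \<G>\<close> by blast
    then show "\<Inter>(\<phi> ` \<D>) = {}"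
      using \<D>(2,3) by (rule empty)
  qed
qed

lemma strongly_point_finite_shrink:
  assumes "strongly_point_finite \<G>" "\<And>G. G \<in> \<G> \<Longrightarrow> \<phi> G \<subseteq> G"
  shows "strongly_point_finite (\<phi> ` \<G>)"
proof (rule strongly_point_finite_image[OF assms(1)])
  fix \<D> assume "\<D> \<subseteq> \<G>" "\<Inter>\<D> = {}"
  have "\<Inter>(\<phi> ` \<D>) \<subseteq> \<Inter>\<D>"
    using \<open>\<D> \<subseteq> \<G>\<close> assms(2) by (auto simp: subset_eq)
  then show "\<Inter>(\<phi> ` \<D>) = {}"
    using \<open>\<Inter>\<D> = {}\<close> by blast
qed

lemma strongly_point_finite_disjoint:
  assumes "pairwise disjnt \<F>"
  shows "strongly_point_finite \<F>"
  unfolding strongly_point_finite_def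
proof (intro allI impI)
  fix \<C> assume \<C>: "\<C> \<subseteq> \<F>" "countable \<C> \<and> infinite \<C>"
  then obtain A where A: "A \<in> \<C>"
    using infinite_imp_nonempty by blast
  have "infinite (\<C> - {A})"
    using \<C>(2) by simp
  then obtain B where "B \<in> \<C> - {A}"
    using infinite_imp_nonempty by blast
  then have B: "B \<in> \<C>" "B \<noteq> A"
    by auto
  have "A \<inter> B = {}"
    using assms \<C>(1) A B unfolding pairwise_def disjnt_def by blast
  then show "\<exists>\<D>\<subseteq>\<C>. finite \<D> \<and> \<Inter>\<D> = {}"
    using A B by (intro exI[of _ "{A, B}"]) simp
qed

lemma strongly_point_finite_imp_point_finite:
  assumes "strongly_point_finite \<F>"
  shows "point_finite_in X \<F>"
  unfolding point_finite_in_def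
proof (intro ballI, rule ccontr)
  fix x assume "infinite {U \<in> \<F>. x \<in> U}"
  then obtain \<C> where \<C>: "\<C> \<subseteq> {U \<in> \<F>. x \<in> U}" "countable \<C> \<and> infinite \<C>"
    by (meson infinite_countable_subset')
  then have "\<C> \<subseteq> \<F>"
    by blast
  then obtain \<D> where \<D>: "\<D> \<subseteq> \<C>" "\<Inter>\<D> = {}"
    using strongly_point_finite_def[THEN iffD1, rule_format, OF assms _ \<C>(2)] by blast
  have "x \<in> \<Inter>\<D>"
    using \<C>(1) \<D>(1) by auto
  then show False
    using \<D>(2) by simp
qed

lemma sigma_strongly_point_finite_UN:
  fixes G :: "'i::countable \<Rightarrow> 'a set set"
  assumes "\<And>i. strongly_point_finite (G i)"
  shows "sigma_strongly_point_finite (\<Union>i. G i)"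
  unfolding sigma_strongly_point_finite_def
proof (intro exI conjI allI)
  show "(\<Union>i. G i) = (\<Union>n. G (from_nat n))"
  proof -
    have "range (\<lambda>n. G (from_nat n)) = range G"
      using surj_from_nat by (metis image_image)
    then show ?thesis
      by simp
  qed
  show "strongly_point_finite (G (from_nat n))" for n
    by (rule assms)
qed

subsection \<open>Extending open sets of a preopen subspace\<close>

definition open_extension :: "'a topology \<Rightarrow> 'a set \<Rightarrow> 'a set \<Rightarrow> 'a set" where
  "open_extension X Y W = X interior_of (X closure_of Y) - X closure_of (Y - W)"

lemma openin_open_extension: "openin X (open_extension X Y W)"
  unfolding open_extension_def by (intro openin_diff) auto

lemma open_extension_subset_closure_of: "open_extension X Y W \<subseteq> X closure_of Y"
  unfolding open_extension_def by (meson Diff_subset interior_of_subset order_trans)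

lemma open_extension_Int_subset:
  assumes "Y \<subseteq> topspace X"
  shows "open_extension X Y W \<inter> Y \<subseteq> W"
proof -
  have "Y - W \<subseteq> X closure_of (Y - W)"
    using assms by (intro closure_of_subset) auto
  then show ?thesis
    unfolding open_extension_def by blast
qed

lemma open_extension_Int_eq:
  assumes "preopen_in X Y" and "openin (subtopology X Y) W"
  shows "open_extension X Y W \<inter> Y = W"
proof
  show "open_extension X Y W \<inter> Y \<subseteq> W"
    using assms(1) unfolding preopen_in_def by (intro open_extension_Int_subset) blast
next
  obtain T where T: "openin X T" "W = T \<inter> Y"
    using assms(2) by (auto simp: openin_subtopology)
  have "T \<inter> (Y - W) = {}"
    using T(2) by auto
  then have "T \<inter> X closure_of (Y - W) = {}"
    using openin_Int_closure_of_eq_empty[OF T(1)] by blast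
  then show "W \<subseteq> open_extension X Y W \<inter> Y"
    using T assms(1) unfolding open_extension_def preopen_in_def by blast
qed

lemma closure_of_open_extension_subset:
  assumes "Y \<subseteq> topspace X"
  shows "X closure_of (open_extension X Y W) \<subseteq> X closure_of W"
proof -
  have "X closure_of (open_extension X Y W) = X closure_of (open_extension X Y W \<inter> Y)"
    by (simp add: closure_of_openin_Int_superset openin_open_extension open_extension_subset_closure_of)
  also have "\<dots> \<subseteq> X closure_of W"
    by (intro closure_of_mono open_extension_Int_subset assms)
  finally show ?thesis .
qed

text \<open>An open subset of the closure of \<open>Y\<close> that misses \<open>Y\<close> is empty.\<close>

lemma Inter_open_extension_eq_empty:
  assumes "Y \<subseteq> topspace X" "finite \<D>" "\<Inter>\<D> = {}"
  shows "\<Inter>(open_extension X Y ` \<D>) = {}"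
proof -
  define S where "S = \<Inter>(open_extension X Y ` \<D>)"
  have "\<D> \<noteq> {}"
    using assms(3) by auto
  then have "openin X S"
    unfolding S_def using assms(2) openin_open_extension by (intro openin_Inter) auto
  moreover have "S \<inter> Y = {}"
  proof -
    have "S \<inter> Y \<subseteq> \<Inter>\<D>"
      unfolding S_def using open_extension_Int_subset[OF assms(1)] by fastforce
    then show ?thesis
      using assms(3) by blast
  qed
  ultimately have "S \<inter> X closure_of Y = {}"
    by (rule openin_Int_closure_of_eq_empty[THEN iffD2])
  moreover obtain D where "D \<in> \<D>"
    using \<open>\<D> \<noteq> {}\<close> by blast
  then have "S \<subseteq> X closure_of Y"
    unfolding S_def using open_extension_subset_closure_of by (rule INT_lower[THEN order_trans])
  ultimately have "S = {}"
    by blast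
  then show ?thesis
    unfolding S_def .
qed

lemma strongly_point_finite_open_extension:
  assumes "Y \<subseteq> topspace X" "strongly_point_finite \<G>"
  shows "strongly_point_finite (open_extension X Y ` \<G>)"
  using assms(2) by (rule strongly_point_finite_image) (use Inter_open_extension_eq_empty[OF assms(1)] in blast)

lemma F_separates_open_extension:
  assumes pre: "preopen_in X Y"
    and opn: "\<And>U. U \<in> \<U> \<Longrightarrow> openin (subtopology X Y) U"
    and sep: "F_separates (subtopology X Y) \<U> Y"
  shows "F_separates X (open_extension X Y ` \<U>) Y"
proof -
  have Y: "Y \<subseteq> topspace X"
    using pre unfolding preopen_in_def by blast
  have mem: "x \<in> open_extension X Y U" if "U \<in> \<U>" "x \<in> U" for U x
    using open_extension_Int_eq[OF pre opn[OF that(1)]] that(2) by blast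
  have not_mem: "y \<notin> X closure_of (open_extension X Y U)"
    if "U \<in> \<U>" "y \<in> Y" "y \<notin> subtopology X Y closure_of U" for U y
  proof -
    have "U \<subseteq> Y"
      using openin_subset[OF opn[OF that(1)]] by simp
    then have "y \<notin> X closure_of U"
      using that(2,3) by (simp add: closure_of_subtopology Int_absorb1)
    then show ?thesis
      using closure_of_open_extension_subset[OF Y] by blast
  qed
  show ?thesis
    unfolding F_separates_def
  proof (intro ballI impI)
    fix x y assume xy: "x \<in> Y" "y \<in> Y" "x \<noteq> y"
    obtain U where U: "U \<in> \<U>" "(x \<in> U \<and> y \<notin> subtopology X Y closure_of U) \<or>
        (y \<in> U \<and> x \<notin> subtopology X Y closure_of U)"
      using F_separates_def[THEN iffD1, rule_format, OF sep xy] by blast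
    then have "(x \<in> open_extension X Y U \<and> y \<notin> X closure_of (open_extension X Y U)) \<or>
        (y \<in> open_extension X Y U \<and> x \<notin> X closure_of (open_extension X Y U))"
      using mem[OF U(1)] not_mem[OF U(1)] xy(1,2) by meson
    then show "\<exists>V\<in>open_extension X Y ` \<U>. (x \<in> V \<and> y \<notin> X closure_of V) \<or> (y \<in> V \<and> x \<notin> X closure_of V)"
      by (rule bexI[OF _ imageI[OF U(1)]])
  qed
qed

lemma F_aleph0_embedded_if_preopen:
  assumes pre: "preopen_in X Y" and sep: "sigma_spf_F_separated (subtopology X Y)"
  shows "F_aleph0_embedded X Y"
proof -
  have Y: "Y \<subseteq> topspace X"
    using pre unfolding preopen_in_def by blast
  obtain \<U> where opn: "\<And>U. U \<in> \<U> \<Longrightarrow> openin (subtopology X Y) U"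
    and spf\<U>: "sigma_strongly_point_finite \<U>" and sepY: "F_separates (subtopology X Y) \<U> Y"
    using sep Y unfolding sigma_spf_F_separated_def by (auto simp: Int_absorb1)
  obtain G :: "nat \<Rightarrow> 'a set set" where \<U>: "\<U> = (\<Union>n. G n)" and spf: "\<And>n. strongly_point_finite (G n)"
    using spf\<U> unfolding sigma_strongly_point_finite_def by blast
  show ?thesis
    unfolding F_aleph0_embedded_def
  proof (intro exI[of _ "open_extension X Y ` \<U>"] exI[of _ "\<lambda>n. open_extension X Y ` G n"] conjI)
    show "\<forall>V\<in>open_extension X Y ` \<U>. openin X V"
      by (simp add: openin_open_extension)
    show "open_extension X Y ` \<U> = (\<Union>n. open_extension X Y ` G n)"
      by (simp add: \<U> image_UN)
    show "\<forall>n. point_finite_in X (open_extension X Y ` G n)"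
      by (intro allI strongly_point_finite_imp_point_finite strongly_point_finite_open_extension[OF Y spf])
    show "F_separates X (open_extension X Y ` \<U>) Y"
      using pre opn sepY by (rule F_separates_open_extension)
  qed
qed

subsection \<open>E-spaces\<close>

lemma closedin_zero_set:
  assumes "zero_set_in X Z"
  shows "closedin X Z"
proof -
  obtain f where "continuous_map X euclideanreal f" "Z = {x \<in> topspace X. f x \<in> {0}}"
    using assms unfolding zero_set_in_def by auto
  then show ?thesis
    using closedin_continuous_map_preimage[of X euclideanreal f "{0}"] by simp
qed

lemma openin_cozero_set: "cozero_set_in X C \<Longrightarrow> openin X C"
  unfolding cozero_set_in_def by (metis closedin_zero_set openin_diff openin_topspace)

lemma generate_topology_on_separates:
  assumes "generate_topology_on S U" "x \<in> U" "y \<notin> U"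
  shows "\<exists>s\<in>S. x \<in> s \<and> y \<notin> s"
  using assms by (induction rule: generate_topology_on.induct) auto

lemma subbase_separates_points:
  assumes "t0_space X" "subbase_of X S" "x \<in> topspace X" "y \<in> topspace X" "x \<noteq> y"
  shows "\<exists>s\<in>S. (x \<in> s \<and> y \<notin> s) \<or> (y \<in> s \<and> x \<notin> s)"
proof -
  obtain U where U: "openin X U" "x \<notin> U \<longleftrightarrow> y \<in> U"
    using assms(1,3-5) unfolding t0_space_def by blast
  moreover have "X = topology_generated_by (insert (topspace X) S)"
    using assms(2) unfolding subbase_of_def by blast
  ultimately have "generate_topology_on (insert (topspace X) S) U"
    by (metis openin_topology_generated_by)
  then obtain s where "s \<in> insert (topspace X) S" "(x \<in> s \<and> y \<notin> s) \<or> (y \<in> s \<and> x \<notin> s)"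
    using generate_topology_on_separates U(2) by meson
  then show ?thesis
    using assms(3,4) by blast
qed

lemma U_representation_mono:
  assumes "U_representation X V R" "1 \<le> m" "m \<le> n"
  shows "R m \<subseteq> R n"
  using assms(3)
proof (induction n rule: dec_induct)
  case (step n)
  then have "R n \<subseteq> R (Suc n)"
    using assms(1,2) unfolding U_representation_def by simp
  then show ?case
    using step.IH by blast
qed simp

lemma U_representation_subset:
  assumes "U_representation X V R" "1 \<le> n"
  shows "R n \<subseteq> V"
  using assms unfolding U_representation_def by auto

lemma closedin_U_representation_odd:
  assumes "U_representation X V R" "1 \<le> n"
  shows "closedin X (R (2*n - 1))"
  using assms closedin_zero_set unfolding U_representation_def by blast

lemma openin_U_representation_even:
  assumes "U_representation X V R" "1 \<le> n"
  shows "openin X (R (2*n))"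
  using assms openin_cozero_set unfolding U_representation_def by blast

lemma U_representation_zero_functions:
  assumes "U_representation X V R"
  shows "\<exists>f. \<forall>n\<ge>1. continuous_map X euclideanreal (f n) \<and> R (2*n - 1) = {x \<in> topspace X. f n x = 0}"
proof -
  have "\<forall>n. \<exists>g. 1 \<le> n \<longrightarrow> continuous_map X euclideanreal g \<and> R (2*n - 1) = {x \<in> topspace X. g x = 0}"
    using assms unfolding U_representation_def zero_set_in_def by blast
  then show ?thesis
    by (rule choice[THEN exE]) blast
qed

lemma U_representations_zero_functions:
  assumes "\<And>V. V \<in> \<alpha> \<Longrightarrow> U_representation X V (R V)"
  shows "\<exists>f. \<forall>V\<in>\<alpha>. \<forall>n\<ge>1.
    continuous_map X euclideanreal (f V n) \<and> R V (2*n - 1) = {x \<in> topspace X. f V n x = 0}"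
proof -
  have "\<forall>V\<in>\<alpha>. \<exists>g. \<forall>n\<ge>1.
      continuous_map X euclideanreal (g n) \<and> R V (2*n - 1) = {x \<in> topspace X. g n x = 0}"
    using U_representation_zero_functions[OF assms] by blast
  then show ?thesis
    by (rule bchoice)
qed

definition zero_set_nbhd :: "(nat \<Rightarrow> 'a set) \<Rightarrow> (nat \<Rightarrow> 'a \<Rightarrow> real) \<Rightarrow> nat \<Rightarrow> nat \<Rightarrow> 'a set" where
  "zero_set_nbhd R f n j = {x \<in> R (2*n). \<bar>f n x\<bar> < inverse (real (Suc j))}"

lemma zero_set_nbhd_subset:
  assumes "U_representation X V R" "1 \<le> n"
  shows "zero_set_nbhd R f n j \<subseteq> V"
  using U_representation_subset[OF assms(1), of "2*n"] assms(2) unfolding zero_set_nbhd_def by auto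

context
  fixes X :: "'a topology" and V :: "'a set" and R :: "nat \<Rightarrow> 'a set" and f :: "nat \<Rightarrow> 'a \<Rightarrow> real"
  assumes U_rep: "U_representation X V R"
    and zero_fun: "\<And>n. 1 \<le> n \<Longrightarrow>
      continuous_map X euclideanreal (f n) \<and> R (2*n - 1) = {x \<in> topspace X. f n x = 0}"
begin

lemma openin_zero_set_nbhd:
  assumes "1 \<le> n"
  shows "openin X (zero_set_nbhd R f n j)"
proof -
  define r where "r = inverse (real (Suc j))"
  have "zero_set_nbhd R f n j = R (2*n) \<inter> {x \<in> topspace X. f n x \<in> {-r<..<r}}"
    using openin_subset[OF openin_U_representation_even[OF U_rep assms]]
    unfolding zero_set_nbhd_def r_def by (auto simp: abs_less_iff)
  moreover have "openin X {x \<in> topspace X. f n x \<in> {-r<..<r}}"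
    using zero_fun[OF assms] by (intro openin_continuous_map_preimage) auto
  ultimately show ?thesis
    using openin_U_representation_even[OF U_rep assms] by (simp add: openin_Int)
qed

lemma closure_of_zero_set_nbhd_subset:
  assumes "1 \<le> n"
  shows "X closure_of zero_set_nbhd R f n j
    \<subseteq> R (2*n + 1) \<inter> {x \<in> topspace X. f n x \<in> {-inverse (real (Suc j))..inverse (real (Suc j))}}"
proof (rule closure_of_minimal)
  have "closedin X (R (2*Suc n - 1))"
    by (rule closedin_U_representation_odd[OF U_rep]) simp
  moreover have "closedin X {x \<in> topspace X. f n x \<in> {-inverse (real (Suc j))..inverse (real (Suc j))}}"
    using zero_fun[OF assms] by (intro closedin_continuous_map_preimage) auto
  ultimately show "closedin X (R (2*n + 1) \<inter> {x \<in> topspace X. f n x \<in> {-inverse (real (Suc j))..inverse (real (Suc j))}})"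
    by (simp add: closedin_Int)
  have "R (2*n) \<subseteq> R (2*n + 1)"
    using U_representation_mono[OF U_rep] assms by simp
  moreover have "R (2*n) \<subseteq> topspace X"
    using openin_subset[OF openin_U_representation_even[OF U_rep assms]] .
  ultimately show "zero_set_nbhd R f n j
      \<subseteq> R (2*n + 1) \<inter> {x \<in> topspace X. f n x \<in> {-inverse (real (Suc j))..inverse (real (Suc j))}}"
    unfolding zero_set_nbhd_def by (auto simp: abs_less_iff)
qed

lemma zero_set_nbhd_separates_member:
  assumes "a \<in> V" "b \<notin> V"
  shows "\<exists>n\<ge>1. a \<in> zero_set_nbhd R f n 0 \<and> b \<notin> X closure_of zero_set_nbhd R f n 0"
proof -
  obtain m where m: "1 \<le> m" "a \<in> R m"
    using U_rep assms(1) unfolding U_representation_def by auto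
  moreover have "m \<le> 2*m - 1"
    using m(1) by linarith
  ultimately have "a \<in> R (2*m - 1)" "a \<in> R (2*m)"
    using U_representation_mono[OF U_rep m(1)] by (auto simp: subset_eq)
  then have "a \<in> zero_set_nbhd R f m 0"
    using zero_fun[OF m(1)] unfolding zero_set_nbhd_def by simp
  moreover have "R (2*m + 1) \<subseteq> V"
    using U_representation_subset[OF U_rep] by simp
  then have "b \<notin> X closure_of zero_set_nbhd R f m 0"
    using closure_of_zero_set_nbhd_subset[OF m(1), of 0] assms(2) by blast
  ultimately show ?thesis
    using m(1) by blast
qed

lemma zero_set_nbhd_separates_zero_set:
  assumes n: "1 \<le> n" and a: "a \<in> topspace X" "a \<notin> R (2*n - 1)" and b: "b \<in> R (2*n - 1)"
  shows "\<exists>j. b \<in> zero_set_nbhd R f n j \<and> a \<notin> X closure_of zero_set_nbhd R f n j"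
proof -
  have "0 < \<bar>f n a\<bar>"
    using zero_fun[OF n] a by auto
  then obtain j where j: "inverse (real (Suc j)) < \<bar>f n a\<bar>"
    using reals_Archimedean by blast
  have "1 \<le> 2*n - 1"
    using n by linarith
  then have "b \<in> R (2*n)"
    using U_representation_mono[OF U_rep, of "2*n - 1" "2*n"] b by auto
  then have "b \<in> zero_set_nbhd R f n j"
    using zero_fun[OF n] b unfolding zero_set_nbhd_def by simp
  moreover have "a \<notin> X closure_of zero_set_nbhd R f n j"
    using closure_of_zero_set_nbhd_subset[OF n, of j] j by (auto simp: abs_le_iff)
  ultimately show ?thesis
    by blast
qed

end

text \<open>Level \<open>Suc n\<close> rather than \<open>n\<close>, as U-representations are indexed from 1.\<close>

definition zero_set_nbhd_family ::
    "(nat \<Rightarrow> 'a set set) \<Rightarrow> ('a set \<Rightarrow> nat \<Rightarrow> 'a set) \<Rightarrow> ('a set \<Rightarrow> nat \<Rightarrow> 'a \<Rightarrow> real)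
      \<Rightarrow> nat \<times> nat \<times> nat \<Rightarrow> 'a set set" where
  "zero_set_nbhd_family GA R f = (\<lambda>(k, n, j). (\<lambda>V. zero_set_nbhd (R V) (f V) (Suc n) j) ` GA k)"

context
  fixes X :: "'a topology" and \<alpha> :: "'a set set" and GA :: "nat \<Rightarrow> 'a set set"
    and R :: "'a set \<Rightarrow> nat \<Rightarrow> 'a set" and f :: "'a set \<Rightarrow> nat \<Rightarrow> 'a \<Rightarrow> real"
  assumes \<alpha>: "\<alpha> = (\<Union>k. GA k)"
    and U_rep: "\<And>V. V \<in> \<alpha> \<Longrightarrow> U_representation X V (R V)"
    and zero_fun: "\<And>V n. V \<in> \<alpha> \<Longrightarrow> 1 \<le> n \<Longrightarrow>
      continuous_map X euclideanreal (f V n) \<and> R V (2*n - 1) = {x \<in> topspace X. f V n x = 0}"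
begin

lemma zero_set_nbhd_in_family:
  assumes "V \<in> \<alpha>" "1 \<le> n"
  shows "zero_set_nbhd (R V) (f V) n j \<in> (\<Union>i. zero_set_nbhd_family GA R f i)"
proof -
  obtain k where "V \<in> GA k"
    using assms(1) \<alpha> by blast
  then have "zero_set_nbhd (R V) (f V) n j \<in> zero_set_nbhd_family GA R f (k, n - 1, j)"
    unfolding zero_set_nbhd_family_def using assms(2) by simp
  then show ?thesis
    by blast
qed

lemma openin_zero_set_nbhd_family:
  assumes "U \<in> zero_set_nbhd_family GA R f i"
  shows "openin X U"
proof -
  obtain k n j V where "V \<in> GA k" "U = zero_set_nbhd (R V) (f V) (Suc n) j"
    using assms unfolding zero_set_nbhd_family_def by (cases i) auto
  moreover have "V \<in> \<alpha>"
    using \<alpha> calculation(1) by blast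
  ultimately show ?thesis
    by (simp add: openin_zero_set_nbhd[OF U_rep zero_fun])
qed

lemma strongly_point_finite_zero_set_nbhd_family:
  assumes "strongly_point_finite (GA k)"
  shows "strongly_point_finite (zero_set_nbhd_family GA R f (k, n, j))"
proof -
  have "zero_set_nbhd (R V) (f V) (Suc n) j \<subseteq> V" if "V \<in> GA k" for V
  proof -
    have "V \<in> \<alpha>"
      using \<alpha> that by blast
    then show ?thesis
      by (intro zero_set_nbhd_subset[OF U_rep]) simp_all
  qed
  then have "strongly_point_finite ((\<lambda>V. zero_set_nbhd (R V) (f V) (Suc n) j) ` GA k)"
    by (rule strongly_point_finite_shrink[OF assms])
  then show ?thesis
    by (simp add: zero_set_nbhd_family_def)
qed

lemma zero_set_nbhd_family_separates:
  assumes s: "s \<in> \<alpha> \<union> {topspace X - R V (2*n - 1) | V n. V \<in> \<alpha> \<and> n \<ge> 1}"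
    and ab: "a \<in> topspace X" "b \<in> topspace X" "a \<in> s" "b \<notin> s"
  shows "\<exists>U\<in>(\<Union>i. zero_set_nbhd_family GA R f i).
    (a \<in> U \<and> b \<notin> X closure_of U) \<or> (b \<in> U \<and> a \<notin> X closure_of U)"
  using s
proof (elim UnE CollectE exE conjE)
  assume "s \<in> \<alpha>"
  have "\<exists>n\<ge>1. a \<in> zero_set_nbhd (R s) (f s) n 0 \<and> b \<notin> X closure_of zero_set_nbhd (R s) (f s) n 0"
    using U_rep[OF \<open>s \<in> \<alpha>\<close>] zero_fun[OF \<open>s \<in> \<alpha>\<close>] ab(3,4) by (rule zero_set_nbhd_separates_member)
  then obtain n where n: "1 \<le> n"
    and "a \<in> zero_set_nbhd (R s) (f s) n 0 \<and> b \<notin> X closure_of zero_set_nbhd (R s) (f s) n 0"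
    by blast
  then show ?thesis
    by (intro bexI[OF _ zero_set_nbhd_in_family[OF \<open>s \<in> \<alpha>\<close> n]] disjI1)
next
  fix V n assume V: "s = topspace X - R V (2*n - 1)" "V \<in> \<alpha>" "1 \<le> n"
  have "a \<notin> R V (2*n - 1)" "b \<in> R V (2*n - 1)"
    using ab V(1) by auto
  then have "\<exists>j. b \<in> zero_set_nbhd (R V) (f V) n j \<and> a \<notin> X closure_of zero_set_nbhd (R V) (f V) n j"
    using U_rep[OF V(2)] zero_fun[OF V(2)] V(3) ab(1) by (intro zero_set_nbhd_separates_zero_set)
  then obtain j where "b \<in> zero_set_nbhd (R V) (f V) n j \<and> a \<notin> X closure_of zero_set_nbhd (R V) (f V) n j"
    by blast
  then show ?thesis
    by (intro bexI[OF _ zero_set_nbhd_in_family[OF V(2,3)]] disjI2)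
qed

end

lemma E_space_imp_sigma_spf_F_separated:
  assumes "E_space X"
  shows "sigma_spf_F_separated X"
proof -
  obtain \<alpha> R where t0: "t0_space X" and U_rep: "\<And>V. V \<in> \<alpha> \<Longrightarrow> U_representation X V (R V)"
    and sb: "subbase_of X (\<alpha> \<union> {topspace X - R V (2*n - 1) | V n. V \<in> \<alpha> \<and> n \<ge> 1})"
    and \<sigma>: "sigma_strongly_point_finite \<alpha>"
    using assms unfolding E_space_def almost_subbase_def by blast
  obtain GA :: "nat \<Rightarrow> 'a set set" where \<alpha>: "\<alpha> = (\<Union>k. GA k)" and GA: "\<And>k. strongly_point_finite (GA k)"
    using \<sigma> unfolding sigma_strongly_point_finite_def by blast
  have "\<exists>f. \<forall>V\<in>\<alpha>. \<forall>n\<ge>1.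
      continuous_map X euclideanreal (f V n) \<and> R V (2*n - 1) = {x \<in> topspace X. f V n x = 0}"
    using U_rep by (rule U_representations_zero_functions)
  then obtain f where "\<forall>V\<in>\<alpha>. \<forall>n\<ge>1.
      continuous_map X euclideanreal (f V n) \<and> R V (2*n - 1) = {x \<in> topspace X. f V n x = 0}"
    by (elim exE)
  then have zero_fun: "\<And>V n. V \<in> \<alpha> \<Longrightarrow> 1 \<le> n \<Longrightarrow>
      continuous_map X euclideanreal (f V n) \<and> R V (2*n - 1) = {x \<in> topspace X. f V n x = 0}"
    by blast
  note family = \<alpha> U_rep zero_fun
  define \<U> where "\<U> = (\<Union>i. zero_set_nbhd_family GA R f i)"
  have "F_separates X \<U> (topspace X)"
    unfolding F_separates_def
  proof (intro ballI impI)
    fix x y assume xy: "x \<in> topspace X" "y \<in> topspace X" "x \<noteq> y"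
    obtain s where s: "s \<in> \<alpha> \<union> {topspace X - R V (2*n - 1) | V n. V \<in> \<alpha> \<and> n \<ge> 1}"
      and "(x \<in> s \<and> y \<notin> s) \<or> (y \<in> s \<and> x \<notin> s)"
      using subbase_separates_points[OF t0 sb xy] by blast
    then consider "x \<in> s" "y \<notin> s" | "y \<in> s" "x \<notin> s"
      by blast
    then show "\<exists>U\<in>\<U>. (x \<in> U \<and> y \<notin> X closure_of U) \<or> (y \<in> U \<and> x \<notin> X closure_of U)"
    proof cases
      case 1
      then show ?thesis
        unfolding \<U>_def using zero_set_nbhd_family_separates[OF family s xy(1,2)] by simp
    next
      case 2
      then show ?thesis
        unfolding \<U>_def using zero_set_nbhd_family_separates[OF family s xy(2,1)] by (simp add: disj_commute)
    qed
  qed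
  moreover have "sigma_strongly_point_finite \<U>"
    unfolding \<U>_def
  proof (rule sigma_strongly_point_finite_UN)
    fix i :: "nat \<times> nat \<times> nat"
    show "strongly_point_finite (zero_set_nbhd_family GA R f i)"
      using strongly_point_finite_zero_set_nbhd_family[OF family GA] by (cases i) simp
  qed
  moreover have "\<forall>U\<in>\<U>. openin X U"
    unfolding \<U>_def using openin_zero_set_nbhd_family[OF family] by blast
  ultimately show ?thesis
    unfolding sigma_spf_F_separated_def by blast
qed

subsection \<open>Metrizable spaces\<close>

lemma ex_wf_total_rel: "\<exists>r :: 'a rel. wf r \<and> (\<forall>a b. a \<noteq> b \<longrightarrow> (a, b) \<in> r \<or> (b, a) \<in> r)"
proof -
  obtain r :: "'a rel" where r: "Well_order r" "Field r = UNIV"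
    using well_ordering by (elim exE conjE)
  have "wf (r - Id)"
    using r(1) unfolding well_order_on_def by (elim conjE)
  moreover have "total_on (Field r) r"
    using r(1) unfolding well_order_on_def linear_order_on_def by (elim conjE)
  then have "(a, b) \<in> r - Id \<or> (b, a) \<in> r - Id" if "a \<noteq> b" for a b
    using that r(2) unfolding total_on_def by simp
  ultimately show ?thesis
    by blast
qed

text \<open>Stone's construction: for a well-order \<open>lt\<close> of the points, the cell of \<open>a\<close> of radius \<open>\<rho>\<close>
  consists of the points \<open>\<rho>\<close>-close to \<open>a\<close> and uniformly farther than \<open>\<rho>\<close> from all predecessors
  of \<open>a\<close>, so cells of the same radius are pairwise disjoint.\<close>

definition (in Metric_space) stone_cell :: "'a rel \<Rightarrow> real \<Rightarrow> 'a \<Rightarrow> 'a set" where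
  "stone_cell lt \<rho> a = {z \<in> M. d z a < \<rho> \<and> (\<exists>s>\<rho>. \<forall>b\<in>M. (b, a) \<in> lt \<longrightarrow> s \<le> d z b)}"

lemma (in Metric_space) openin_stone_cell:
  assumes "a \<in> M"
  shows "openin mtopology (stone_cell lt \<rho> a)"
  unfolding openin_mtopology
proof (intro conjI allI impI)
  show "stone_cell lt \<rho> a \<subseteq> M"
    unfolding stone_cell_def by blast
  fix z assume "z \<in> stone_cell lt \<rho> a"
  then obtain s where z: "z \<in> M" "d z a < \<rho>" "s > \<rho>" and far: "\<And>b. b \<in> M \<Longrightarrow> (b, a) \<in> lt \<Longrightarrow> s \<le> d z b"
    unfolding stone_cell_def by blast
  define \<epsilon> where "\<epsilon> = min (\<rho> - d z a) ((s - \<rho>) / 2)"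
  have "mball z \<epsilon> \<subseteq> stone_cell lt \<rho> a"
  proof
    fix w assume "w \<in> mball z \<epsilon>"
    then have w: "w \<in> M" "d z w < \<epsilon>"
      by auto
    have "d w a < \<rho>"
      using triangle[OF w(1) z(1) assms] w(2) commute[of w z] unfolding \<epsilon>_def by auto
    moreover have "(s + \<rho>) / 2 \<le> d w b" if "b \<in> M" "(b, a) \<in> lt" for b
      using triangle[OF z(1) w(1) that(1)] far[OF that] w(2) unfolding \<epsilon>_def by auto
    moreover have "(s + \<rho>) / 2 > \<rho>"
      using z(3) by simp
    ultimately show "w \<in> stone_cell lt \<rho> a"
      unfolding stone_cell_def using w(1) by blast
  qed
  moreover have "\<epsilon> > 0"
    using z unfolding \<epsilon>_def by auto
  ultimately show "\<exists>r>0. mball z r \<subseteq> stone_cell lt \<rho> a"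
    by blast
qed

lemma (in Metric_space) stone_cells_disjoint:
  assumes "a \<in> M" "(a, b) \<in> lt"
  shows "stone_cell lt \<rho> a \<inter> stone_cell lt \<rho> b = {}"
proof -
  have "z \<notin> stone_cell lt \<rho> a" if z: "z \<in> stone_cell lt \<rho> b" for z
  proof -
    obtain s where "s > \<rho>" "\<And>c. c \<in> M \<Longrightarrow> (c, b) \<in> lt \<Longrightarrow> s \<le> d z c"
      using z unfolding stone_cell_def by blast
    then have "d z a > \<rho>"
      using assms by force
    then show ?thesis
      unfolding stone_cell_def by auto
  qed
  then show ?thesis
    by blast
qed

lemma (in Metric_space) pairwise_disjnt_stone_cells:
  assumes "\<And>a b. a \<noteq> b \<Longrightarrow> (a, b) \<in> lt \<or> (b, a) \<in> lt"
  shows "pairwise disjnt (stone_cell lt \<rho> ` M)"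
  unfolding pairwise_def disjnt_def
proof (intro ballI impI)
  fix A B assume "A \<in> stone_cell lt \<rho> ` M" "B \<in> stone_cell lt \<rho> ` M" "A \<noteq> B"
  then obtain a b where ab: "a \<in> M" "b \<in> M" "A = stone_cell lt \<rho> a" "B = stone_cell lt \<rho> b" "a \<noteq> b"
    by blast
  then consider "(a, b) \<in> lt" | "(b, a) \<in> lt"
    using assms by blast
  then show "A \<inter> B = {}"
  proof cases
    case 1
    then show ?thesis
      using stone_cells_disjoint[OF ab(1)] ab(3,4) by simp
  next
    case 2
    then show ?thesis
      using stone_cells_disjoint[OF ab(2)] ab(3,4) by (simp add: Int_commute)
  qed
qed

text \<open>Given \<open>x \<noteq> y\<close>, let \<open>a\<close> be the first point within \<open>d x y / 2\<close> of \<open>x\<close>; all earlier points are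
  at least that far from \<open>x\<close>, so a rational radius between \<open>d x a\<close> and \<open>d x y / 2\<close> puts \<open>x\<close>
  into the cell of \<open>a\<close> while the closed ball of that radius around \<open>a\<close> misses \<open>y\<close>.\<close>

lemma (in Metric_space) stone_cell_separates:
  assumes wf: "wf lt" and xy: "x \<in> M" "y \<in> M" "x \<noteq> y"
  shows "\<exists>q. \<exists>a\<in>M. x \<in> stone_cell lt (of_rat q) a \<and> y \<notin> mtopology closure_of stone_cell lt (of_rat q) a"
proof -
  define t where "t = d x y / 2"
  define A where "A = {a \<in> M. d x a < t}"
  have "x \<in> A"
    unfolding A_def t_def using xy by simp
  then obtain a where "a \<in> A" and first: "\<And>b. (b, a) \<in> lt \<Longrightarrow> b \<notin> A"
    using wfE_min[OF wf] by blast
  then have a: "a \<in> M" "d x a < t"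
    unfolding A_def by auto
  obtain r where r: "r \<in> \<rat>" "d x a < r" "r < t"
    using Rats_dense_in_real[OF a(2)] by blast
  then obtain q where q: "r = of_rat q"
    by (auto elim: Rats_cases)
  have "x \<in> stone_cell lt r a"
    unfolding stone_cell_def using xy(1) r(2,3) commute[of x a] first unfolding A_def by fastforce
  moreover have "stone_cell lt r a \<subseteq> mcball a r"
    unfolding stone_cell_def using a(1) commute by auto
  then have "mtopology closure_of stone_cell lt r a \<subseteq> mcball a r"
    by (rule closure_of_minimal) simp
  moreover have "r < d a y"
    using triangle[OF xy(1) a(1) xy(2)] a(2) r(3) unfolding t_def by auto
  ultimately have "x \<in> stone_cell lt r a \<and> y \<notin> mtopology closure_of stone_cell lt r a"
    by auto
  then show ?thesis
    unfolding q using a(1) by (intro exI bexI)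
qed

lemma (in Metric_space) sigma_spf_F_separated_mtopology: "sigma_spf_F_separated mtopology"
proof -
  obtain lt :: "'a rel" where wf: "wf lt" and "\<forall>a b. a \<noteq> b \<longrightarrow> (a, b) \<in> lt \<or> (b, a) \<in> lt"
    using ex_wf_total_rel by (elim exE conjE)
  then have total: "\<And>a b. a \<noteq> b \<Longrightarrow> (a, b) \<in> lt \<or> (b, a) \<in> lt"
    by simp
  define G where "G q = stone_cell lt (of_rat q) ` M" for q :: rat
  show ?thesis
    unfolding sigma_spf_F_separated_def
  proof (intro exI[of _ "\<Union>q. G q"] conjI)
    show "\<forall>U\<in>(\<Union>q. G q). openin mtopology U"
      unfolding G_def by (auto simp: openin_stone_cell)
    show "sigma_strongly_point_finite (\<Union>q. G q)"
      unfolding G_def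
      by (intro sigma_strongly_point_finite_UN strongly_point_finite_disjoint pairwise_disjnt_stone_cells total)
    show "F_separates mtopology (\<Union>q. G q) (topspace mtopology)"
      unfolding F_separates_def
    proof (intro ballI impI)
      fix x y assume "x \<in> topspace mtopology" "y \<in> topspace mtopology" "x \<noteq> y"
      then have "\<exists>q. \<exists>a\<in>M. x \<in> stone_cell lt (of_rat q) a \<and> y \<notin> mtopology closure_of stone_cell lt (of_rat q) a"
        by (intro stone_cell_separates[OF wf]) simp_all
      then obtain q a where "a \<in> M"
        and "x \<in> stone_cell lt (of_rat q) a \<and> y \<notin> mtopology closure_of stone_cell lt (of_rat q) a"
        by blast
      then show "\<exists>U\<in>(\<Union>q. G q). (x \<in> U \<and> y \<notin> mtopology closure_of U) \<or> (y \<in> U \<and> x \<notin> mtopology closure_of U)"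
        unfolding G_def by (intro bexI[of _ "stone_cell lt (of_rat q) a"] disjI1) auto
    qed
  qed
qed

lemma metrizable_imp_sigma_spf_F_separated:
  assumes "metrizable_space X"
  shows "sigma_spf_F_separated X"
proof -
  obtain M d where "Metric_space M d" "X = Metric_space.mtopology M d"
    using assms unfolding metrizable_space_def by blast
  then show ?thesis
    by (simp add: Metric_space.sigma_spf_F_separated_mtopology)
qed

lemma preopen_in_dense:
  assumes "D \<subseteq> topspace X" "X closure_of D = topspace X"
  shows "preopen_in X D"
  using assms unfolding preopen_in_def by simp

theorem corollary4p9:
  fixes X :: "'a topology" and Y :: "'a set"
  assumes "t0_space X"
  shows "(preopen_in X Y \<and> E_space (subtopology X Y) \<longrightarrow> F_aleph0_embedded X Y) \<and>
         (\<forall>D. D \<subseteq> topspace X \<and> X closure_of D = topspace X \<and> metrizable_space (subtopology X D)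
              \<longrightarrow> F_aleph0_embedded X D)"
proof (intro conjI impI allI)
  assume "preopen_in X Y \<and> E_space (subtopology X Y)"
  then show "F_aleph0_embedded X Y"
    by (simp add: F_aleph0_embedded_if_preopen E_space_imp_sigma_spf_F_separated)
next
  fix D assume "D \<subseteq> topspace X \<and> X closure_of D = topspace X \<and> metrizable_space (subtopology X D)"
  then show "F_aleph0_embedded X D"
    by (simp add: F_aleph0_embedded_if_preopen preopen_in_dense metrizable_imp_sigma_spf_F_separated)
qed

end
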